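(* Consider the distributed quantized average consensus and weight-balancing algorithm described in the context on a strongly connected digraph, under the stated step-size and range conditions. Let $V(\mathbf{y})=\Vert\mathbf{y}-\bar y(0)\mathbf{1}\Vert^2$, $\tilde{\mathbf{y}}(k)=(\tilde y_i(k))_i$, and $\mathbf{L}^+(k)=\mathbf{S}^+(k)-\mathbf{A}(k)$ with $\mathbf{S}^+(k)=\mathrm{diag}(S_1^+(k),\dots,S_N^+(k))$. Then there exist finite constants $c_1,c_2>0$ such that for all $k$, $\mathbf{y}(k)^T\mathbf{L}^+(k)\tilde{\mathbf{y}}(k)\ge c_1V(\mathbf{y}(k))-c_2\Vert\boldsymbol{\epsilon}(k)\Vert_1$.
   Context: $\mathcal{G}=(\mathcal{V},\mathcal{E})$, $\mathcal{V}=\{1,\dots,N\}$, no self-loops, strongly connected; $\mathcal{N}_i^-=\{j:(j,i)\in\mathcal{E}\}$, $\mathcal{N}_i^+=\{j:(i,j)\in\mathcal{E}\}$, $d_i^+=|\mathcal{N}_i^+|$, $S_i^+(k)=\sum_{j\in\mathcal{N}_i^+}a_{ji}(k)$. Algorithm: given $q_{\min}<q_{\max}$ and initial values $y_i(0)$ with $\bar y(0)=\frac1N\sum_i y_i(0)\in[q_{\min},q_{\max}]$; $a_{ij}(0)=1$ if $j\in\mathcal{N}_i^-$, else $0$. $\gamma(k)=2^{-n}$ for $2^n-1\le k\le 2^{n+1}-2$; $\alpha(k)>0$ nonincreasing with $\sum\alpha(k)=\infty$, $\sum\alpha(k)^2<\infty$. At step $k$: $b_i(k)=\sum_{j\in\mathcal{N}_i^-}a_{ij}(k)-S_i^+(k)$,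 $\boldsymbol{\epsilon}(k)=(|b_i(k)|)_i$; $n_i(k)=\mathcal{I}\{b_i(k)\ge d_i^+\gamma(k)\}$; $\tilde y_i(k)=\min\{\max\{y_i(k),q_{\min}\},q_{\max}\}$; $x_i(k)=q_{\max}$ with probability $p_i(k)=\frac{\tilde y_i(k)-q_{\min}}{q_{\max}-q_{\min}}$ and $q_{\min}$ otherwise; $a_{ij}(k+1)=a_{ij}(k)+n_j(k)\gamma(k)$ for $j\in\mathcal{N}_i^-$; $y_i(k+1)=y_i(k)+\alpha(k)\sum_{j\in\mathcal{N}_i^-}a_{ij}(k)(x_j(k)-x_i(k))+\alpha(k)b_i(k)x_i(k)$. *)

theory Defs
  imports Complex_Main
begin

text \<open>Nodes are the elements of a finite type 'n; the digraph is a set of edges E.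
  (j,i) \<in> E means an edge from j to i.\<close>

definition in_nbrs :: "('n \<times> 'n) set \<Rightarrow> 'n \<Rightarrow> 'n set" where
  "in_nbrs E i = {j. (j, i) \<in> E}"

definition out_nbrs :: "('n \<times> 'n) set \<Rightarrow> 'n \<Rightarrow> 'n set" where
  "out_nbrs E i = {j. (i, j) \<in> E}"

definition out_deg :: "('n \<times> 'n) set \<Rightarrow> 'n \<Rightarrow> nat" where
  "out_deg E i = card (out_nbrs E i)"

definition S_out :: "('n \<times> 'n) set \<Rightarrow> ('n \<Rightarrow> 'n \<Rightarrow> real) \<Rightarrow> 'n \<Rightarrow> real" where
  "S_out E a i = (\<Sum>j\<in>out_nbrs E i. a j i)"

definition imbal :: "('n \<times> 'n) set \<Rightarrow> ('n \<Rightarrow> 'n \<Rightarrow> real) \<Rightarrow> 'n \<Rightarrow> real" where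
  "imbal E a i = (\<Sum>j\<in>in_nbrs E i. a i j) - S_out E a i"

text \<open>gamma(k) = 2^(-n) for 2^n - 1 \<le> k \<le> 2^(n+1) - 2.\<close>
definition gamma :: "nat \<Rightarrow> real" where
  "gamma k = 1 / 2 ^ (LEAST n. k + 1 < 2 ^ (n + 1))"

definition nflag :: "('n \<times> 'n) set \<Rightarrow> ('n \<Rightarrow> 'n \<Rightarrow> real) \<Rightarrow> nat \<Rightarrow> 'n \<Rightarrow> real" where
  "nflag E a k i = (if imbal E a i \<ge> real (out_deg E i) * gamma k then 1 else 0)"

definition clip :: "real \<Rightarrow> real \<Rightarrow> real \<Rightarrow> real" where
  "clip qmin qmax v = min (max v qmin) qmax"

definition prob_hi :: "real \<Rightarrow> real \<Rightarrow> real \<Rightarrow> real" where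
  "prob_hi qmin qmax v = (clip qmin qmax v - qmin) / (qmax - qmin)"

definition Lplus :: "('n \<times> 'n) set \<Rightarrow> ('n \<Rightarrow> 'n \<Rightarrow> real) \<Rightarrow> 'n \<Rightarrow> 'n \<Rightarrow> real" where
  "Lplus E a i j = (if i = j then S_out E a i else 0) - a i j"

end

(*
  All out-edges of node j carry the same weight 1 + gain_j, and node j raises it
  by gamma(k) only when its imbalance b_j(k) is at least d_j gamma(k), which is exactly what the
  raise removes, while raises of its in-neighbours only increase b_j.  Hence min(b_j, 0) never
  decreases.  Once every node has fired, all imbalances are nonnegative and sum to zero, so they
  vanish and no node fires again.  Before that some node j0 still has gain 0, and since each
  in-neighbour sum of weights equals b_i + d_i (1 + gain_i), strong connectivity bounds every gain
  in terms of gain_j0.  The total gain is thus increasing and bounded, and since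
  gamma(s) >= 1/(s+1), for large t some step in [t, 2t+1] is quiet.  This gives
  |b_i(t)| = O(gamma(t)), and with sum alpha^2 < oo also sum alpha(k) |b_i(k)| < oo.

  Bounded states.  When y_i leaves [qmin, qmax], the quantized value x_i sits at the nearer end,
  so the consensus term pulls y_i back and only the summable term alpha b_i x_i pushes it out.

  With z = clip y,
    y' L+ z = 1/2 sum a_ij (z_i - z_j)^2 + sum b_i (z_i^2/2 - y_i z_i) + sum a_ij (y_i - z_i)(z_i - z_j),
  and the last sum is nonnegative because clipping is a projection.  Since edge weights are at
  least 1, the energy term bounds the spread of z along paths, and as the mean of y stays in
  [qmin, qmax], the deviation of y from its mean is at most a multiple of that spread; so the
  energy term dominates c1 V(y).  The middle term is at least -c2 ||b||_1 because y is bounded.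
*)

theory Submission
  imports Defs "HOL-Analysis.Analysis"
begin

section \<open>Step sizes and series\<close>

lemma gamma_dyadic:
  obtains n where "gamma k = 1 / 2 ^ n" and "2 ^ n \<le> k + 1" and "k + 1 < 2 ^ (n + 1)"
proof -
  define n where "n = (LEAST n. k + 1 < (2::nat) ^ (n + 1))"
  have "k + 1 < 2 ^ (n + 1)"
    unfolding n_def by (rule LeastI[of _ k]) (rule less_exp)
  moreover have "2 ^ n \<le> k + 1"
  proof (cases n)
    case (Suc m)
    then have "\<not> k + 1 < (2::nat) ^ (m + 1)"
      using not_less_Least[of m "\<lambda>n. k + 1 < (2::nat) ^ (n + 1)"] n_def by simp
    then show ?thesis using Suc by simp
  qed simp
  moreover have "gamma k = 1 / 2 ^ n"
    unfolding gamma_def n_def by simp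
  ultimately show ?thesis using that by blast
qed

lemma gamma_pos: "0 < gamma k"
  by (rule gamma_dyadic[of k]) simp

lemma gamma_le_1: "gamma k \<le> 1"
  by (rule gamma_dyadic[of k]) simp

lemma inverse_Suc_le_gamma: "1 / real (k + 1) \<le> gamma k"
proof (rule gamma_dyadic[of k])
  fix n :: nat
  assume "gamma k = 1 / 2 ^ n" and "2 ^ n \<le> k + 1"
  then have "real (2 ^ n) \<le> real (k + 1)"
    by (simp only: of_nat_le_iff)
  then show ?thesis
    using \<open>gamma k = 1 / 2 ^ n\<close> by (simp add: frac_le)
qed

lemma gamma_less: "gamma k < 2 / real (k + 1)"
proof (rule gamma_dyadic[of k])
  fix n :: nat
  assume "gamma k = 1 / 2 ^ n" and "k + 1 < 2 ^ (n + 1)"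
  then have "real (k + 1) < real (2 ^ (n + 1))"
    by (simp only: of_nat_less_iff)
  then have "real (k + 1) < 2 * 2 ^ n"
    by simp
  then have "2 / (2 * 2 ^ n) < 2 / real (k + 1)"
    by (intro divide_strict_left_mono) auto
  then show ?thesis using \<open>gamma k = 1 / 2 ^ n\<close> by simp
qed

lemma gamma_le_6_gamma:
  assumes "t + 1 \<le> 3 * (s + 1)"
  shows "gamma s \<le> 6 * gamma t"
proof -
  have "gamma s < 2 / real (s + 1)" by (rule gamma_less)
  also have "\<dots> \<le> 6 / real (t + 1)"
    using assms by (simp add: field_simps)
  also have "\<dots> \<le> 6 * gamma t"
    using inverse_Suc_le_gamma[of t] by (simp add: divide_le_eq)
  finally show ?thesis by simp
qed

lemma summable_gamma_sq: "summable (\<lambda>k. (gamma k)\<^sup>2)"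
proof (rule summable_comparison_test)
  show "summable (\<lambda>k. 4 * (1 / (real k + 1)\<^sup>2))"
    using sums_summable[OF inverse_squares_sums] by (intro summable_mult) (simp add: add.commute)
  show "\<exists>K. \<forall>k\<ge>K. norm ((gamma k)\<^sup>2) \<le> 4 * (1 / (real k + 1)\<^sup>2)"
  proof (intro exI allI impI)
    fix k :: nat
    have "(gamma k)\<^sup>2 \<le> (2 / real (k + 1))\<^sup>2"
      using gamma_less[of k] gamma_pos[of k] by (intro power_mono) auto
    then show "norm ((gamma k)\<^sup>2) \<le> 4 * (1 / (real k + 1)\<^sup>2)"
      by (simp add: power_divide add.commute)
  qed
qed

lemma summable_mult_if_summable_sq:
  fixes f g :: "nat \<Rightarrow> real"
  assumes "summable (\<lambda>k. (f k)\<^sup>2)" and "summable (\<lambda>k. (g k)\<^sup>2)"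
  shows "summable (\<lambda>k. f k * g k)"
proof (rule summable_comparison_test')
  show "summable (\<lambda>k. (f k)\<^sup>2 + (g k)\<^sup>2)"
    using assms by (rule summable_add)
  fix k
  have "2 * \<bar>f k\<bar> * \<bar>g k\<bar> \<le> (f k)\<^sup>2 + (g k)\<^sup>2"
    using sum_squares_bound[of "\<bar>f k\<bar>" "\<bar>g k\<bar>"] by simp
  moreover have "0 \<le> \<bar>f k\<bar> * \<bar>g k\<bar>" by simp
  ultimately have "\<bar>f k\<bar> * \<bar>g k\<bar> \<le> (f k)\<^sup>2 + (g k)\<^sup>2" by linarith
  then show "norm (f k * g k) \<le> (f k)\<^sup>2 + (g k)\<^sup>2"
    by (simp add: abs_mult)
qed

lemma le_max_plus_sum_if_drift:
  fixes u e :: "nat \<Rightarrow> real"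
  assumes e_nonneg: "\<And>k. 0 \<le> e k" and drift: "\<And>k. u (Suc k) \<le> max (u k + e k) c"
  shows "u k \<le> max (u 0) c + (\<Sum>t<k. e t)"
proof (induction k)
  case (Suc k)
  have "0 \<le> (\<Sum>t<k. e t)" by (intro sum_nonneg e_nonneg)
  with Suc.IH drift[of k] e_nonneg[of k] show ?case by (simp add: max_def split: if_splits)
qed simp

section \<open>Zero-sum vectors and clipping\<close>

lemma abs_le_card_mult_if_sum_eq_0:
  fixes v :: "'n::finite \<Rightarrow> real"
  assumes sum_0: "(\<Sum>l\<in>UNIV. v l) = 0" and lower: "\<And>l. - c \<le> v l"
  shows "\<bar>v i\<bar> \<le> real CARD('n) * c"
proof -
  have "(\<Sum>l\<in>(UNIV::'n set). - c) \<le> (\<Sum>l\<in>UNIV. v l)"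
    by (rule sum_mono) (rule lower)
  then have "0 \<le> c" using sum_0 by (simp add: zero_le_mult_iff)
  have "(\<Sum>l\<in>UNIV - {i}. - c) \<le> (\<Sum>l\<in>UNIV - {i}. v l)"
    by (rule sum_mono) (rule lower)
  moreover have "(\<Sum>l\<in>UNIV - {i}. v l) = - v i"
    using sum.remove[of UNIV i v] sum_0 by simp
  moreover have "card (UNIV - {i} :: 'n set) = CARD('n) - 1"
    by (simp add: card_Diff_singleton)
  ultimately have "v i \<le> real CARD('n) * c - c"
    by (simp add: of_nat_diff Suc_leI algebra_simps)
  moreover have "c \<le> real CARD('n) * c"
    using \<open>0 \<le> c\<close> by (simp add: mult_le_cancel_right1 Suc_leI)
  ultimately show ?thesis
    unfolding abs_le_iff using lower[of i] \<open>0 \<le> c\<close> by linarith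
qed

lemma clip_mono: "qmin \<le> qmax \<Longrightarrow> u \<le> v \<Longrightarrow> clip qmin qmax u \<le> clip qmin qmax v"
  unfolding clip_def by simp

lemma clip_eq_self: "qmin \<le> v \<Longrightarrow> v \<le> qmax \<Longrightarrow> clip qmin qmax v = v"
  unfolding clip_def by simp

lemma clip_eq_qmin: "qmin \<le> qmax \<Longrightarrow> v \<le> qmin \<Longrightarrow> clip qmin qmax v = qmin"
  unfolding clip_def by simp

lemma clip_eq_qmax: "qmin \<le> qmax \<Longrightarrow> qmax \<le> v \<Longrightarrow> clip qmin qmax v = qmax"
  unfolding clip_def by simp

lemma abs_clip_le: "qmin \<le> qmax \<Longrightarrow> \<bar>clip qmin qmax v\<bar> \<le> \<bar>qmin\<bar> + \<bar>qmax\<bar>"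
  unfolding clip_def by simp

lemma clip_le_self: "qmin < clip qmin qmax v \<Longrightarrow> clip qmin qmax v \<le> v"
  unfolding clip_def by (auto simp: max_def)

lemma clip_uminus: "qmin \<le> qmax \<Longrightarrow> clip qmin qmax (- v) = - clip (- qmax) (- qmin) v"
  unfolding clip_def by simp

lemma clip_projection_ineq:
  "qmin \<le> qmax \<Longrightarrow> 0 \<le> (v - clip qmin qmax v) * (clip qmin qmax v - clip qmin qmax w)"
  unfolding clip_def by (auto simp: min_def max_def mult_nonneg_nonneg mult_nonpos_nonpos)

lemma mean_dev_le_card_mult_clip_spread:
  fixes y :: "'n::finite \<Rightarrow> real"
  assumes "qmin + D < m" and "m \<le> qmax"
    and mean: "(\<Sum>l\<in>UNIV. y l - m) = 0"
    and spread: "\<And>p q. \<bar>clip qmin qmax (y p) - clip qmin qmax (y q)\<bar> \<le> D"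
  shows "\<bar>y i - m\<bar> \<le> real CARD('n) * D"
proof -
  have "\<exists>p. m \<le> y p"
  proof (rule ccontr)
    assume "\<nexists>p. m \<le> y p"
    then have "(\<Sum>l\<in>UNIV. y l - m) < (\<Sum>l\<in>(UNIV::'n set). 0)"
      by (intro sum_strict_mono) (auto simp: not_le)
    then show False using mean by simp
  qed
  then obtain p where "m \<le> y p" ..
  have "0 \<le> D" using spread[of p p] by simp
  then have "m = clip qmin qmax m" using assms(1,2) by (simp add: clip_eq_self)
  also have "\<dots> \<le> clip qmin qmax (y p)"
    using \<open>m \<le> y p\<close> assms(1,2) \<open>0 \<le> D\<close> by (intro clip_mono) auto
  finally have "m \<le> clip qmin qmax (y p)" .
  have "- D \<le> y l - m" for l
  proof -
    have "m - D \<le> clip qmin qmax (y l)"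
      using spread[of p l] \<open>m \<le> clip qmin qmax (y p)\<close> by linarith
    moreover from this have "clip qmin qmax (y l) \<le> y l"
      using assms(1) by (intro clip_le_self) linarith
    ultimately show ?thesis by linarith
  qed
  then show ?thesis by (rule abs_le_card_mult_if_sum_eq_0[OF mean])
qed

text \<open>If the clipped spread is small, the mean is far from one end of the interval; the
  one-sided lemma applies to \<open>y\<close> or, mirrored, to \<open>- y\<close>.\<close>

lemma mean_dev_le_clip_spread:
  fixes y :: "'n::finite \<Rightarrow> real"
  assumes q: "qmin < qmax" and "qmin \<le> m" and "m \<le> qmax"
    and mean: "(\<Sum>l\<in>UNIV. y l) = real CARD('n) * m"
    and bounded: "\<And>l. \<bar>y l - m\<bar> \<le> R"
    and spread: "\<And>p q. \<bar>clip qmin qmax (y p) - clip qmin qmax (y q)\<bar> \<le> D"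
  shows "\<bar>y i - m\<bar> \<le> max (2 * R / (qmax - qmin)) (real CARD('n)) * D"
proof -
  have "0 \<le> D" using spread[of i i] by simp
  have sum_0: "(\<Sum>l\<in>UNIV. y l - m) = 0" using mean by (simp add: sum_subtractf)
  consider "(qmax - qmin) / 2 \<le> D" | "qmin + D < m" | "m < qmax - D"
    by atomize_elim argo
  then show ?thesis
  proof cases
    case 1
    have "\<bar>y i - m\<bar> \<le> 2 * R / (qmax - qmin) * ((qmax - qmin) / 2)"
      using bounded[of i] q by simp
    also have "\<dots> \<le> 2 * R / (qmax - qmin) * D"
      using 1 bounded[of i] q by (intro mult_left_mono) auto
    also have "\<dots> \<le> max (2 * R / (qmax - qmin)) (real CARD('n)) * D"
      using \<open>0 \<le> D\<close> by (intro mult_right_mono) auto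
    finally show ?thesis .
  next
    case 2
    then have "\<bar>y i - m\<bar> \<le> real CARD('n) * D"
      using \<open>m \<le> qmax\<close> sum_0 spread by (rule mean_dev_le_card_mult_clip_spread)
    also have "\<dots> \<le> max (2 * R / (qmax - qmin)) (real CARD('n)) * D"
      using \<open>0 \<le> D\<close> by (intro mult_right_mono) auto
    finally show ?thesis .
  next
    case 3
    have "\<bar>- y i - - m\<bar> \<le> real CARD('n) * D"
    proof (rule mean_dev_le_card_mult_clip_spread)
      show "(\<Sum>l\<in>UNIV. - y l - - m) = 0"
        using sum_0 by (simp add: sum_subtractf)
      show "\<bar>clip (- qmax) (- qmin) (- y p) - clip (- qmax) (- qmin) (- y q)\<bar> \<le> D" for p q
        using spread[of q p] q by (simp add: clip_uminus)
    qed (use 3 \<open>qmin \<le> m\<close> in auto)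
    also have "\<dots> \<le> max (2 * R / (qmax - qmin)) (real CARD('n)) * D"
      using \<open>0 \<le> D\<close> by (intro mult_right_mono) auto
    finally show ?thesis by simp
  qed
qed

section \<open>Weighted digraphs\<close>

lemma out_nbrs_nonempty_if_strongly_connected:
  fixes E :: "('n::finite \<times> 'n) set"
  assumes "\<forall>i j. (i, j) \<in> E\<^sup>*" and "CARD('n) \<noteq> 1"
  shows "out_nbrs E k \<noteq> {}"
proof -
  have "UNIV \<noteq> {k}" using assms(2) card_1_singleton_iff[of "UNIV :: 'n set"] by auto
  then obtain l where "l \<noteq> k" by auto
  then obtain u where "(k, u) \<in> E"
    using assms(1) by (metis converse_rtranclE)
  then show ?thesis unfolding out_nbrs_def by auto
qed

definition edge_supported :: "('n \<times> 'n) set \<Rightarrow> ('n \<Rightarrow> 'n \<Rightarrow> real) \<Rightarrow> bool" where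
  "edge_supported E a \<longleftrightarrow> (\<forall>i j. a i j \<noteq> 0 \<longrightarrow> j \<in> in_nbrs E i)"

definition dirichlet_energy :: "('n::finite \<Rightarrow> 'n \<Rightarrow> real) \<Rightarrow> ('n \<Rightarrow> real) \<Rightarrow> real" where
  "dirichlet_energy a z = (\<Sum>i\<in>UNIV. \<Sum>j\<in>UNIV. a i j * (z i - z j)\<^sup>2)"

context
  fixes E :: "('n::finite \<times> 'n) set" and a :: "'n \<Rightarrow> 'n \<Rightarrow> real"
  assumes supp: "edge_supported E a"
begin

lemma sum_in_nbrs_eq_sum_UNIV: "(\<Sum>j\<in>in_nbrs E i. a i j * f j) = (\<Sum>j\<in>UNIV. a i j * f j)"
  by (rule sum.mono_neutral_left) (use supp in \<open>auto simp: edge_supported_def\<close>)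

lemma S_out_eq_sum: "S_out E a i = (\<Sum>l\<in>UNIV. a l i)"
  unfolding S_out_def
  by (rule sum.mono_neutral_left) (use supp in \<open>auto simp: edge_supported_def in_nbrs_def out_nbrs_def\<close>)

lemma imbal_eq_row_sum_minus_col_sum: "imbal E a i = (\<Sum>j\<in>UNIV. a i j) - (\<Sum>l\<in>UNIV. a l i)"
  unfolding imbal_def S_out_eq_sum using sum_in_nbrs_eq_sum_UNIV[of i "\<lambda>_. 1"] by simp

lemma sum_imbal_mult: "(\<Sum>i\<in>UNIV. imbal E a i * g i) = (\<Sum>i\<in>UNIV. \<Sum>j\<in>UNIV. a i j * (g i - g j))"
proof -
  have "(\<Sum>i\<in>UNIV. imbal E a i * g i)
      = (\<Sum>i\<in>UNIV. \<Sum>j\<in>UNIV. a i j * g i) - (\<Sum>i\<in>UNIV. \<Sum>l\<in>UNIV. a l i * g i)"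
    by (simp add: imbal_eq_row_sum_minus_col_sum left_diff_distrib sum_subtractf sum_distrib_right)
  also have "(\<Sum>i\<in>UNIV. \<Sum>l\<in>UNIV. a l i * g i) = (\<Sum>i\<in>UNIV. \<Sum>j\<in>UNIV. a i j * g j)"
    by (rule sum.swap)
  finally show ?thesis by (simp add: right_diff_distrib sum_subtractf)
qed

lemma sum_imbal_eq_0: "(\<Sum>i\<in>UNIV. imbal E a i) = 0"
  using sum_imbal_mult[of "\<lambda>_. 1"] by simp

lemma Lplus_form:
  "(\<Sum>i\<in>UNIV. \<Sum>j\<in>UNIV. y i * Lplus E a i j * z j) = (\<Sum>i\<in>UNIV. \<Sum>j\<in>UNIV. a i j * (y j - y i) * z j)"
proof -
  have "y i * Lplus E a i j * z j = (if i = j then y i * S_out E a i * z i else 0) - a i j * y i * z j"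
    for i j
    by (simp add: Lplus_def algebra_simps)
  then have "(\<Sum>i\<in>UNIV. \<Sum>j\<in>UNIV. y i * Lplus E a i j * z j)
      = (\<Sum>i\<in>UNIV. y i * S_out E a i * z i) - (\<Sum>i\<in>UNIV. \<Sum>j\<in>UNIV. a i j * y i * z j)"
    by (simp add: sum_subtractf)
  also have "(\<Sum>i\<in>UNIV. y i * S_out E a i * z i) = (\<Sum>i\<in>UNIV. \<Sum>l\<in>UNIV. a l i * y i * z i)"
    unfolding S_out_eq_sum by (simp add: sum_distrib_left sum_distrib_right mult.assoc mult.left_commute)
  also have "\<dots> = (\<Sum>i\<in>UNIV. \<Sum>j\<in>UNIV. a i j * y j * z j)"
    by (rule sum.swap)
  also have "(\<Sum>i\<in>UNIV. \<Sum>j\<in>UNIV. a i j * y j * z j) - (\<Sum>i\<in>UNIV. \<Sum>j\<in>UNIV. a i j * y i * z j)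
      = (\<Sum>i\<in>UNIV. \<Sum>j\<in>UNIV. a i j * y j * z j - a i j * y i * z j)"
    by (simp only: sum_subtractf)
  finally show ?thesis by (simp add: left_diff_distrib right_diff_distrib)
qed

lemma Lplus_form_ge:
  assumes nonneg: "\<And>i j. 0 \<le> a i j"
    and proj: "\<And>i j. 0 \<le> (y i - z i) * (z i - z j)"
  shows "dirichlet_energy a z / 2 + (\<Sum>i\<in>UNIV. imbal E a i * ((z i)\<^sup>2 / 2 - y i * z i))
    \<le> (\<Sum>i\<in>UNIV. \<Sum>j\<in>UNIV. y i * Lplus E a i j * z j)"
proof -
  define g where "g i = (z i)\<^sup>2 / 2 - y i * z i" for i
  have "a i j * (y j - y i) * z j
      = a i j * (z i - z j)\<^sup>2 / 2 + a i j * (g i - g j) + a i j * ((y i - z i) * (z i - z j))" for i j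
    unfolding g_def by (simp add: field_simps power2_eq_square)
  then have "(\<Sum>i\<in>UNIV. \<Sum>j\<in>UNIV. y i * Lplus E a i j * z j)
      = dirichlet_energy a z / 2 + (\<Sum>i\<in>UNIV. imbal E a i * g i)
        + (\<Sum>i\<in>UNIV. \<Sum>j\<in>UNIV. a i j * ((y i - z i) * (z i - z j)))"
    by (simp add: Lplus_form sum_imbal_mult dirichlet_energy_def sum.distrib sum_divide_distrib)
  moreover have "0 \<le> (\<Sum>i\<in>UNIV. \<Sum>j\<in>UNIV. a i j * ((y i - z i) * (z i - z j)))"
    by (intro sum_nonneg mult_nonneg_nonneg nonneg proj)
  ultimately show ?thesis unfolding g_def by linarith
qed

end

lemma dirichlet_energy_nonneg: "(\<And>i j. 0 \<le> a i j) \<Longrightarrow> 0 \<le> dirichlet_energy a z"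
  unfolding dirichlet_energy_def by (intro sum_nonneg mult_nonneg_nonneg) auto

lemma abs_diff_le_sqrt_dirichlet_energy:
  fixes a :: "'n::finite \<Rightarrow> 'n \<Rightarrow> real"
  assumes nonneg: "\<And>i j. 0 \<le> a i j" and "1 \<le> a i j"
  shows "\<bar>z i - z j\<bar> \<le> sqrt (dirichlet_energy a z)"
proof -
  have "(z i - z j)\<^sup>2 \<le> a i j * (z i - z j)\<^sup>2"
    using \<open>1 \<le> a i j\<close> by (simp add: mult_right_mono[of 1 "a i j", simplified])
  also have "\<dots> \<le> (\<Sum>j\<in>UNIV. a i j * (z i - z j)\<^sup>2)"
    by (rule member_le_sum[where f = "\<lambda>j. a i j * (z i - z j)\<^sup>2"])
      (auto intro!: mult_nonneg_nonneg nonneg)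
  also have "\<dots> \<le> dirichlet_energy a z"
    unfolding dirichlet_energy_def
    by (rule member_le_sum[where f = "\<lambda>i. \<Sum>j\<in>UNIV. a i j * (z i - z j)\<^sup>2"])
      (auto intro!: sum_nonneg mult_nonneg_nonneg nonneg)
  finally show ?thesis by (metis real_sqrt_abs real_sqrt_le_mono)
qed

lemma abs_diff_le_path_length_mult_sqrt_dirichlet_energy:
  fixes a :: "'n::finite \<Rightarrow> 'n \<Rightarrow> real"
  assumes nonneg: "\<And>i j. 0 \<le> a i j" and edge: "\<And>i j. j \<in> in_nbrs E i \<Longrightarrow> 1 \<le> a i j"
    and "(p, q) \<in> E ^^ n"
  shows "\<bar>z p - z q\<bar> \<le> real n * sqrt (dirichlet_energy a z)"
  using \<open>(p, q) \<in> E ^^ n\<close>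
proof (induction n arbitrary: q)
  case (Suc n)
  then obtain u where "(p, u) \<in> E ^^ n" and "(u, q) \<in> E" by auto
  then have "\<bar>z p - z u\<bar> \<le> real n * sqrt (dirichlet_energy a z)"
    using Suc.IH by blast
  moreover have "\<bar>z q - z u\<bar> \<le> sqrt (dirichlet_energy a z)"
    using \<open>(u, q) \<in> E\<close> by (intro abs_diff_le_sqrt_dirichlet_energy nonneg edge) (simp add: in_nbrs_def)
  ultimately show ?case by (simp add: abs_le_iff algebra_simps)
qed simp

section \<open>The algorithm\<close>

locale quantized_consensus =
  fixes E :: "('n::finite \<times> 'n) set"
    and qmin qmax :: real
    and alpha :: "nat \<Rightarrow> real"
    and a :: "nat \<Rightarrow> 'n \<Rightarrow> 'n \<Rightarrow> real"
    and y x :: "nat \<Rightarrow> 'n \<Rightarrow> real"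
  assumes strongly_connected: "(i, j) \<in> E\<^sup>*"
    and q_lt: "qmin < qmax"
    and mean_range: "qmin \<le> (\<Sum>i\<in>UNIV. y 0 i) / real CARD('n)"
      "(\<Sum>i\<in>UNIV. y 0 i) / real CARD('n) \<le> qmax"
    and alpha_pos: "0 < alpha k"
    and alpha_noninc: "alpha (Suc k) \<le> alpha k"
    and alpha_sq: "summable (\<lambda>k. (alpha k)\<^sup>2)"
    and a_init: "a 0 i j = (if j \<in> in_nbrs E i then 1 else 0)"
    and a_step: "a (Suc k) i j =
      (if j \<in> in_nbrs E i then a k i j + nflag E (a k) k j * gamma k else a k i j)"
    and x_vals: "x k i = qmin \<or> x k i = qmax"
    and x_hi_supp: "x k i = qmax \<Longrightarrow> 0 < prob_hi qmin qmax (y k i)"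
    and x_lo_supp: "x k i = qmin \<Longrightarrow> prob_hi qmin qmax (y k i) < 1"
    and y_step: "y (Suc k) i = y k i
      + alpha k * (\<Sum>j\<in>in_nbrs E i. a k i j * (x k j - x k i))
      + alpha k * imbal E (a k) i * x k i"
begin

abbreviation "mean \<equiv> (\<Sum>i\<in>UNIV. y 0 i) / real CARD('n)"
abbreviation "b k i \<equiv> imbal E (a k) i"
abbreviation "nf k j \<equiv> nflag E (a k) k j"
abbreviation "d j \<equiv> real (out_deg E j)"
abbreviation "y_tilde k i \<equiv> clip qmin qmax (y k i)"

definition gain :: "nat \<Rightarrow> 'n \<Rightarrow> real" where
  "gain k j = (\<Sum>s<k. nf s j * gamma s)"

lemma nf_cases: "nf k j = 0 \<or> nf k j = 1"
  unfolding nflag_def by simp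

lemma nf_eq_1_iff: "nf k j = 1 \<longleftrightarrow> d j * gamma k \<le> b k j"
  unfolding nflag_def by simp

lemma nf_nonneg: "0 \<le> nf k j"
  unfolding nflag_def by simp

lemma gain_Suc: "gain (Suc k) j = gain k j + nf k j * gamma k"
  unfolding gain_def by simp

lemma gain_nonneg: "0 \<le> gain k j"
  unfolding gain_def by (intro sum_nonneg mult_nonneg_nonneg nf_nonneg less_imp_le[OF gamma_pos])

lemma a_eq_gain: "a k i j = (if j \<in> in_nbrs E i then 1 + gain k j else 0)"
proof (induction k)
  case 0
  then show ?case by (simp add: a_init gain_def)
next
  case (Suc k)
  then show ?case by (simp add: a_step gain_Suc)
qed

lemma a_nonneg: "0 \<le> a k i j"
  using gain_nonneg[of k j] by (simp add: a_eq_gain)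

lemma a_ge_1: "j \<in> in_nbrs E i \<Longrightarrow> 1 \<le> a k i j"
  using gain_nonneg[of k j] by (simp add: a_eq_gain)

lemma edge_supported_a: "edge_supported E (a k)"
  unfolding edge_supported_def by (simp add: a_eq_gain)

lemma sum_b_eq_0: "(\<Sum>i\<in>UNIV. b k i) = 0"
  by (rule sum_imbal_eq_0[OF edge_supported_a])

lemma b_eq_gain: "b k i = (\<Sum>j\<in>in_nbrs E i. 1 + gain k j) - d i * (1 + gain k i)"
proof -
  have "S_out E (a k) i = (\<Sum>j\<in>out_nbrs E i. 1 + gain k i)"
    unfolding S_out_def by (rule sum.cong) (auto simp: a_eq_gain in_nbrs_def out_nbrs_def)
  then show ?thesis
    by (simp add: imbal_def a_eq_gain out_deg_def)
qed

lemma b_Suc: "b (Suc k) i = b k i + gamma k * ((\<Sum>j\<in>in_nbrs E i. nf k j) - d i * nf k i)"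
  unfolding b_eq_gain gain_Suc by (simp add: sum.distrib sum_distrib_left algebra_simps)

lemma b_Suc_ge: "min (b k i) 0 \<le> b (Suc k) i"
  and b_Suc_nonneg_if_fired: "nf k i = 1 \<Longrightarrow> 0 \<le> b (Suc k) i"
proof -
  have "0 \<le> gamma k * (\<Sum>j\<in>in_nbrs E i. nf k j)"
    by (intro mult_nonneg_nonneg sum_nonneg nf_nonneg less_imp_le[OF gamma_pos])
  moreover have "nf k i = 1 \<Longrightarrow> d i * gamma k \<le> b k i"
    using nf_eq_1_iff by blast
  ultimately show "nf k i = 1 \<Longrightarrow> 0 \<le> b (Suc k) i"
    unfolding b_Suc by (simp add: algebra_simps)
  then show "min (b k i) 0 \<le> b (Suc k) i"
    using \<open>0 \<le> gamma k * _\<close> nf_cases[of k i] unfolding b_Suc by (auto simp: algebra_simps)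
qed

lemma b_ge_min: "s \<le> t \<Longrightarrow> min (b s i) 0 \<le> b t i"
proof (induction t rule: dec_induct)
  case (step t)
  then show ?case using b_Suc_ge[of t i] by linarith
qed simp

lemma b_nonneg_if_gain_pos: "gain t j \<noteq> 0 \<Longrightarrow> 0 \<le> b t j"
proof -
  assume "gain t j \<noteq> 0"
  then obtain s where "s < t" and "nf s j \<noteq> 0"
    unfolding gain_def by (metis (no_types, lifting) lessThan_iff mult_zero_left sum.neutral)
  then have "0 \<le> b (Suc s) j"
    using nf_cases by (intro b_Suc_nonneg_if_fired) metis
  with b_ge_min[of "Suc s" t j] \<open>s < t\<close> show ?thesis by simp
qed

definition imbal_bound :: real where
  "imbal_bound = real CARD('n) * (\<Sum>i\<in>UNIV. \<bar>b 0 i\<bar>)"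

lemma abs_b_le: "\<bar>b t i\<bar> \<le> imbal_bound"
  unfolding imbal_bound_def
proof (rule abs_le_card_mult_if_sum_eq_0[OF sum_b_eq_0])
  fix l
  have "\<bar>b 0 l\<bar> \<le> (\<Sum>i\<in>UNIV. \<bar>b 0 i\<bar>)"
    by (rule member_le_sum) auto
  then show "- (\<Sum>i\<in>UNIV. \<bar>b 0 i\<bar>) \<le> b t l"
    using b_ge_min[of 0 t l] by linarith
qed

lemma imbal_bound_nonneg: "0 \<le> imbal_bound"
  using abs_b_le[of 0 undefined] by linarith

lemma d_le_card: "d i \<le> real CARD('n)"
  unfolding out_deg_def by (simp add: card_mono)

lemma gain_le_in_nbr:
  assumes "j \<in> in_nbrs E i"
  shows "1 + gain t j \<le> imbal_bound + real CARD('n) * (1 + gain t i)"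
proof -
  have "1 + gain t j \<le> (\<Sum>j\<in>in_nbrs E i. 1 + gain t j)"
    by (rule member_le_sum) (use assms gain_nonneg in \<open>auto intro: add_nonneg_nonneg\<close>)
  also have "\<dots> = b t i + d i * (1 + gain t i)"
    by (simp add: b_eq_gain)
  also have "\<dots> \<le> imbal_bound + real CARD('n) * (1 + gain t i)"
    using abs_b_le[of t i] d_le_card[of i] gain_nonneg[of t i]
    by (intro add_mono mult_right_mono) auto
  finally show ?thesis .
qed

lemma gain_le_path:
  "(j, m) \<in> E ^^ n \<Longrightarrow> 1 + gain t j \<le> (real CARD('n) + 1) ^ n * (1 + gain t m + imbal_bound)"
proof (induction n arbitrary: m)
  case 0
  then show ?case using imbal_bound_nonneg by simp
next
  case (Suc n)
  then obtain u where "(j, u) \<in> E ^^ n" and "(u, m) \<in> E" by auto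
  then have "1 + gain t j \<le> (real CARD('n) + 1) ^ n * (1 + gain t u + imbal_bound)"
    using Suc.IH by blast
  also have "\<dots> \<le> (real CARD('n) + 1) ^ n * ((real CARD('n) + 1) * (1 + gain t m + imbal_bound))"
  proof (rule mult_left_mono)
    have "1 + gain t u \<le> imbal_bound + real CARD('n) * (1 + gain t m)"
      using \<open>(u, m) \<in> E\<close> by (intro gain_le_in_nbr) (simp add: in_nbrs_def)
    moreover have "imbal_bound \<le> real CARD('n) * imbal_bound"
      using imbal_bound_nonneg by (simp add: mult_le_cancel_right1 Suc_leI)
    ultimately show "1 + gain t u + imbal_bound \<le> (real CARD('n) + 1) * (1 + gain t m + imbal_bound)"
      using gain_nonneg[of t m] by (simp add: algebra_simps)
  qed simp
  finally show ?case
    by (simp add: ac_simps)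
qed

lemma path_le_card:
  obtains n where "n \<le> card E" and "(p, q) \<in> E ^^ n"
  using strongly_connected[of p q] rtrancl_finite_eq_relpow[of E] by auto

definition gain_bound :: real where
  "gain_bound = (real CARD('n) + 1) ^ card E * (1 + imbal_bound)"

lemma gain_le_if_unfired:
  assumes "gain t j0 = 0"
  shows "1 + gain t j \<le> gain_bound"
proof (rule path_le_card[of j j0])
  fix n
  assume "n \<le> card E" and "(j, j0) \<in> E ^^ n"
  then have "1 + gain t j \<le> (real CARD('n) + 1) ^ n * (1 + imbal_bound)"
    using gain_le_path[of j j0 n t] assms by simp
  also have "\<dots> \<le> (real CARD('n) + 1) ^ card E * (1 + imbal_bound)"
    using \<open>n \<le> card E\<close> imbal_bound_nonneg by (intro mult_right_mono power_increasing) auto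
  finally show ?thesis unfolding gain_bound_def .
qed

lemma y_step_UNIV:
  "y (Suc k) i = y k i + alpha k * ((\<Sum>j\<in>UNIV. a k i j * (x k j - x k i)) + b k i * x k i)"
proof -
  have "(\<Sum>j\<in>in_nbrs E i. a k i j * (x k j - x k i)) = (\<Sum>j\<in>UNIV. a k i j * (x k j - x k i))"
    by (rule sum_in_nbrs_eq_sum_UNIV[OF edge_supported_a])
  then show ?thesis
    by (simp only: y_step) (simp add: algebra_simps)
qed

lemma sum_y_eq: "(\<Sum>i\<in>UNIV. y k i) = (\<Sum>i\<in>UNIV. y 0 i)"
proof (induction k)
  case (Suc k)
  have "(\<Sum>i\<in>UNIV. b k i * x k i) = (\<Sum>i\<in>UNIV. \<Sum>j\<in>UNIV. a k i j * (x k i - x k j))"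
    by (rule sum_imbal_mult[OF edge_supported_a])
  then have "(\<Sum>i\<in>UNIV. (\<Sum>j\<in>UNIV. a k i j * (x k j - x k i)) + b k i * x k i)
      = (\<Sum>i\<in>UNIV. \<Sum>j\<in>UNIV. a k i j * (x k j - x k i) + a k i j * (x k i - x k j))"
    by (simp add: sum.distrib)
  also have "\<dots> = 0"
    by (simp add: algebra_simps)
  finally have "(\<Sum>i\<in>UNIV. (\<Sum>j\<in>UNIV. a k i j * (x k j - x k i)) + b k i * x k i) = 0" .
  then have "(\<Sum>i\<in>UNIV. alpha k * ((\<Sum>j\<in>UNIV. a k i j * (x k j - x k i)) + b k i * x k i)) = 0"
    by (simp add: sum_distrib_left[symmetric])
  with Suc.IH show ?case
    by (simp add: y_step_UNIV sum.distrib)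
qed simp

lemma Lplus_form_ge_y_tilde:
  "dirichlet_energy (a k) (y_tilde k) / 2 + (\<Sum>i\<in>UNIV. b k i * ((y_tilde k i)\<^sup>2 / 2 - y k i * y_tilde k i))
    \<le> (\<Sum>i\<in>UNIV. \<Sum>j\<in>UNIV. y k i * Lplus E (a k) i j * y_tilde k j)"
  using q_lt by (intro Lplus_form_ge edge_supported_a a_nonneg clip_projection_ineq) simp

lemma abs_y_tilde_diff_le:
  "\<bar>y_tilde k p - y_tilde k q\<bar> \<le> real (card E) * sqrt (dirichlet_energy (a k) (y_tilde k))"
proof (rule path_le_card[of p q])
  fix n
  assume "n \<le> card E" and "(p, q) \<in> E ^^ n"
  then have "\<bar>y_tilde k p - y_tilde k q\<bar> \<le> real n * sqrt (dirichlet_energy (a k) (y_tilde k))"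
    by (intro abs_diff_le_path_length_mult_sqrt_dirichlet_energy a_nonneg a_ge_1)
  also have "\<dots> \<le> real (card E) * sqrt (dirichlet_energy (a k) (y_tilde k))"
    using \<open>n \<le> card E\<close> dirichlet_energy_nonneg[OF a_nonneg] by (intro mult_right_mono) auto
  finally show ?thesis .
qed

lemma x_eq_qmax: "qmax \<le> y k i \<Longrightarrow> x k i = qmax"
  using x_vals[of k i] x_lo_supp[of k i] q_lt by (auto simp: prob_hi_def clip_eq_qmax)

lemma x_eq_qmin: "y k i \<le> qmin \<Longrightarrow> x k i = qmin"
  using x_vals[of k i] x_hi_supp[of k i] q_lt by (auto simp: prob_hi_def clip_eq_qmin)

lemma x_bounds: "qmin \<le> x k i" "x k i \<le> qmax"
  using x_vals[of k i] q_lt by auto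

lemma abs_x_le: "\<bar>x k i\<bar> \<le> \<bar>qmin\<bar> + \<bar>qmax\<bar>"
  using x_vals[of k i] by auto

lemma abs_b_mult_x_le: "\<bar>b k i * x k i\<bar> \<le> \<bar>b k i\<bar> * (\<bar>qmin\<bar> + \<bar>qmax\<bar>)"
  unfolding abs_mult using abs_x_le by (intro mult_left_mono) auto

lemma y_Suc_le:
  assumes "\<bar>y (Suc k) i - y k i\<bar> \<le> J"
  shows "y (Suc k) i \<le> max (y k i + alpha k * \<bar>b k i\<bar> * (\<bar>qmin\<bar> + \<bar>qmax\<bar>)) (qmax + J)"
proof (cases "qmax \<le> y k i")
  case True
  then have "(\<Sum>j\<in>UNIV. a k i j * (x k j - x k i)) \<le> 0"
    by (intro sum_nonpos mult_nonneg_nonpos a_nonneg) (simp add: x_eq_qmax x_bounds)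
  then have "(\<Sum>j\<in>UNIV. a k i j * (x k j - x k i)) + b k i * x k i \<le> \<bar>b k i\<bar> * (\<bar>qmin\<bar> + \<bar>qmax\<bar>)"
    using abs_b_mult_x_le[of k i] by (simp add: abs_le_iff)
  then have "y (Suc k) i \<le> y k i + alpha k * (\<bar>b k i\<bar> * (\<bar>qmin\<bar> + \<bar>qmax\<bar>))"
    unfolding y_step_UNIV using alpha_pos[of k] by (simp add: mult_left_mono)
  then show ?thesis by (simp add: mult.assoc)
next
  case False
  then show ?thesis using assms by auto
qed

lemma y_Suc_ge:
  assumes "\<bar>y (Suc k) i - y k i\<bar> \<le> J"
  shows "- y (Suc k) i \<le> max (- y k i + alpha k * \<bar>b k i\<bar> * (\<bar>qmin\<bar> + \<bar>qmax\<bar>)) (- qmin + J)"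
proof (cases "y k i \<le> qmin")
  case True
  then have "0 \<le> (\<Sum>j\<in>UNIV. a k i j * (x k j - x k i))"
    by (intro sum_nonneg mult_nonneg_nonneg a_nonneg) (simp add: x_eq_qmin x_bounds)
  then have "- (\<bar>b k i\<bar> * (\<bar>qmin\<bar> + \<bar>qmax\<bar>)) \<le> (\<Sum>j\<in>UNIV. a k i j * (x k j - x k i)) + b k i * x k i"
    using abs_b_mult_x_le[of k i] by (simp add: abs_le_iff)
  then have "alpha k * - (\<bar>b k i\<bar> * (\<bar>qmin\<bar> + \<bar>qmax\<bar>))
      \<le> alpha k * ((\<Sum>j\<in>UNIV. a k i j * (x k j - x k i)) + b k i * x k i)"
    using alpha_pos[of k] by (intro mult_left_mono) auto
  then have "- y (Suc k) i \<le> - y k i + alpha k * (\<bar>b k i\<bar> * (\<bar>qmin\<bar> + \<bar>qmax\<bar>))"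
    unfolding y_step_UNIV by simp
  then show ?thesis by (simp add: mult.assoc)
next
  case False
  then show ?thesis using assms by auto
qed

lemma single_node_lower_bound:
  assumes "CARD('n) = 1"
  shows "\<exists>c1 c2. c1 > 0 \<and> c2 > 0 \<and> (\<forall>k.
     (\<Sum>i\<in>UNIV. \<Sum>j\<in>UNIV. y k i * Lplus E (a k) i j * clip qmin qmax (y k j))
       \<ge> c1 * (\<Sum>i\<in>UNIV. (y k i - mean)\<^sup>2) - c2 * (\<Sum>i\<in>UNIV. \<bar>b k i\<bar>))"
proof -
  obtain w :: 'n where UNIV_eq: "UNIV = {w}"
    using assms card_1_singletonE by blast
  have b_eq_0: "b k i = 0" for k i
  proof -
    have "i = w" using UNIV_I[of i] unfolding UNIV_eq by simp
    then show ?thesis using sum_b_eq_0[of k] by (simp add: UNIV_eq)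
  qed
  have "(\<Sum>i\<in>UNIV. (y k i - mean)\<^sup>2) = 0" for k
    using sum_y_eq[of k] by (simp add: UNIV_eq)
  moreover have "0 \<le> (\<Sum>i\<in>UNIV. \<Sum>j\<in>UNIV. y k i * Lplus E (a k) i j * clip qmin qmax (y k j))" for k
  proof -
    have "0 \<le> dirichlet_energy (a k) (y_tilde k)"
      by (intro dirichlet_energy_nonneg a_nonneg)
    then show ?thesis
      using Lplus_form_ge_y_tilde[of k] by (simp add: b_eq_0)
  qed
  ultimately show ?thesis
    by (intro exI[of _ 1]) (simp add: b_eq_0)
qed

end

section \<open>Bounded weights and states\<close>

locale quantized_consensus_nontrivial = quantized_consensus E qmin qmax alpha a y x
  for E :: "('n::finite \<times> 'n) set" and qmin qmax alpha a y x +
  assumes out_nbrs_nonempty: "out_nbrs E j \<noteq> {}"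
begin

lemma nf_eq_0_if_b_eq_0: "b t j = 0 \<Longrightarrow> nf t j = 0"
proof -
  have "0 < card (out_nbrs E j)"
    using out_nbrs_nonempty by (simp add: card_gt_0_iff)
  then have "0 < d j * gamma t"
    using gamma_pos by (simp add: out_deg_def)
  then show "b t j = 0 \<Longrightarrow> nf t j = 0"
    unfolding nflag_def by simp
qed

lemma gain_le: "gain t j \<le> gain_bound"
proof (induction t arbitrary: j)
  case 0
  then show ?case using gain_le_if_unfired[of 0 j j] by (simp add: gain_def)
next
  case (Suc t)
  show ?case
  proof (cases "\<exists>j0. gain t j0 = 0")
    case True
    then have "1 + gain t j \<le> gain_bound"
      using gain_le_if_unfired by blast
    moreover have "nf t j * gamma t \<le> 1"
      using nf_cases[of t j] gamma_le_1[of t] by auto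
    ultimately show ?thesis by (simp add: gain_Suc)
  next
    case False
    then have "0 \<le> b t l" for l
      by (simp add: b_nonneg_if_gain_pos)
    then have "b t j = 0"
      using sum_b_eq_0[of t] sum_nonneg_eq_0_iff[of UNIV "b t"] by simp
    then show ?thesis
      using Suc.IH[of j] by (simp add: gain_Suc nf_eq_0_if_b_eq_0)
  qed
qed

lemma a_le: "a k i j \<le> 1 + gain_bound"
  using gain_le[of k j] gain_nonneg[of k j] by (simp add: a_eq_gain)

definition total_gain :: "nat \<Rightarrow> real" where
  "total_gain t = (\<Sum>j\<in>UNIV. gain t j)"

lemma total_gain_Suc: "total_gain (Suc t) = total_gain t + gamma t * (\<Sum>j\<in>UNIV. nf t j)"
  unfolding total_gain_def gain_Suc by (simp add: sum.distrib sum_distrib_left mult.commute)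

lemma total_gain_Suc_ge: "(\<exists>j. nf t j = 1) \<Longrightarrow> total_gain t + gamma t \<le> total_gain (Suc t)"
proof -
  assume "\<exists>j. nf t j = 1"
  then obtain j where "nf t j = 1" ..
  moreover have "nf t j \<le> (\<Sum>j\<in>UNIV. nf t j)"
    by (rule member_le_sum) (simp_all add: nf_nonneg)
  ultimately have "1 \<le> (\<Sum>j\<in>UNIV. nf t j)" by simp
  then show ?thesis
    unfolding total_gain_Suc using gamma_pos[of t] by (simp add: mult_le_cancel_left1)
qed

lemma Cauchy_total_gain: "Cauchy total_gain"
proof -
  have "incseq total_gain"
    by (rule incseq_SucI) (simp add: total_gain_Suc sum_nonneg nf_nonneg less_imp_le[OF gamma_pos])
  moreover have "total_gain t \<le> real CARD('n) * gain_bound" for t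
    unfolding total_gain_def using sum_bounded_above[of "UNIV :: 'n set" "gain t" gain_bound] gain_le by simp
  ultimately show ?thesis
    using incseq_convergent LIMSEQ_imp_Cauchy by blast
qed

lemma total_gain_ge_sum_gamma:
  assumes "\<And>s. t \<le> s \<Longrightarrow> s < t + m \<Longrightarrow> \<exists>j. nf s j = 1"
  shows "total_gain t + (\<Sum>s = t..<t + m. gamma s) \<le> total_gain (t + m)"
  using assms
proof (induction m)
  case (Suc m)
  then have "total_gain t + (\<Sum>s = t..<t + m. gamma s) \<le> total_gain (t + m)"
    by simp
  moreover have "total_gain (t + m) + gamma (t + m) \<le> total_gain (Suc (t + m))"
    using Suc.prems by (intro total_gain_Suc_ge) simp
  ultimately show ?case by simp
qed simp

text \<open>Since \<open>gamma s \<ge> 1 / (s + 1)\<close>, firing at every step of \<open>[t, 2 t + 1]\<close> would raise the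
  convergent total gain by at least \<open>1 / 2\<close>.\<close>

lemma quiet_step_exists:
  obtains T where "\<And>t. T \<le> t \<Longrightarrow> \<exists>s. t \<le> s \<and> s \<le> 2 * t + 1 \<and> (\<forall>j. nf s j = 0)"
proof -
  obtain T where T: "\<And>m n. T \<le> m \<Longrightarrow> T \<le> n \<Longrightarrow> \<bar>total_gain m - total_gain n\<bar> < 1 / 2"
    using metric_CauchyD[OF Cauchy_total_gain, of "1 / 2"] by (auto simp: dist_real_def)
  have "\<exists>s. t \<le> s \<and> s \<le> 2 * t + 1 \<and> (\<forall>j. nf s j = 0)" if "T \<le> t" for t
  proof (rule ccontr)
    assume "\<not> ?thesis"
    then have "\<exists>j. nf s j = 1" if "t \<le> s" "s < t + (t + 2)" for s
      using that nf_cases by fastforce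
    then have "total_gain t + (\<Sum>s = t..<t + (t + 2). gamma s) \<le> total_gain (t + (t + 2))"
      by (rule total_gain_ge_sum_gamma)
    moreover have "1 / 2 \<le> (\<Sum>s = t..<t + (t + 2). gamma s)"
    proof -
      have "1 / 2 \<le> (\<Sum>s = t..<t + (t + 2). 1 / (2 * real t + 2))"
        by (simp add: field_simps)
      also have "\<dots> \<le> (\<Sum>s = t..<t + (t + 2). gamma s)"
      proof (rule sum_mono)
        fix s
        assume "s \<in> {t..<t + (t + 2)}"
        then have "1 / (2 * real t + 2) \<le> 1 / real (s + 1)"
          by (intro divide_left_mono) auto
        then show "1 / (2 * real t + 2) \<le> gamma s"
          using inverse_Suc_le_gamma[of s] by linarith
      qed
      finally show ?thesis .
    qed
    moreover have "total_gain (t + (t + 2)) - total_gain t < 1 / 2"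
      using abs_less_iff T[of "t + (t + 2)" t] that by (metis le_add1 order_trans)
    ultimately show False by linarith
  qed
  then show ?thesis using that by blast
qed

text \<open>At a step where no node fires, every imbalance is below \<open>d j * gamma s\<close>; as the
  imbalances sum to zero and never drop below \<open>min (b s j) 0\<close> afterwards, they stay
  \<open>O(gamma s)\<close>.\<close>

lemma abs_b_le_after_quiet:
  assumes "s \<le> t" and quiet: "\<forall>j. nf s j = 0"
  shows "\<bar>b t i\<bar> \<le> real CARD('n) * (real CARD('n) * (real CARD('n) * gamma s))"
proof (rule abs_le_card_mult_if_sum_eq_0[OF sum_b_eq_0])
  fix l
  have "\<bar>- b s l\<bar> \<le> real CARD('n) * (real CARD('n) * gamma s)"
  proof (rule abs_le_card_mult_if_sum_eq_0)
    show "(\<Sum>j\<in>UNIV. - b s j) = 0"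
      using sum_b_eq_0[of s] by (simp add: sum_negf)
    fix j
    have "b s j < d j * gamma s"
      using quiet nf_eq_1_iff[of s j] by auto
    also have "\<dots> \<le> real CARD('n) * gamma s"
      using d_le_card gamma_pos[of s] by (intro mult_right_mono) auto
    finally show "- (real CARD('n) * gamma s) \<le> - b s j" by simp
  qed
  then show "- (real CARD('n) * (real CARD('n) * gamma s)) \<le> b t l"
    using b_ge_min[OF \<open>s \<le> t\<close>, of l] by simp
qed

lemma b_eventually_small:
  obtains C T where "\<And>t i. T \<le> t \<Longrightarrow> \<bar>b t i\<bar> \<le> C * gamma t"
proof -
  obtain T where T: "\<And>t. T \<le> t \<Longrightarrow> \<exists>s. t \<le> s \<and> s \<le> 2 * t + 1 \<and> (\<forall>j. nf s j = 0)"
    by (rule quiet_step_exists) (rule that)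
  have "\<bar>b t i\<bar> \<le> real CARD('n) * (real CARD('n) * (real CARD('n) * 6)) * gamma t"
    if "2 * T + 1 \<le> t" for t i
  proof -
    define t' where "t' = (t - 1) div 2"
    have "T \<le> t'" and "2 * t' + 1 \<le> t" and "t + 1 \<le> 3 * (t' + 1)"
      using that unfolding t'_def by presburger+
    then obtain s where "t' \<le> s" "s \<le> t" and quiet: "\<forall>j. nf s j = 0"
      using T[of t'] by fastforce
    have "\<bar>b t i\<bar> \<le> real CARD('n) * (real CARD('n) * (real CARD('n) * gamma s))"
      by (rule abs_b_le_after_quiet[OF \<open>s \<le> t\<close> quiet])
    also have "\<dots> \<le> real CARD('n) * (real CARD('n) * (real CARD('n) * (6 * gamma t)))"
      using \<open>t' \<le> s\<close> \<open>t + 1 \<le> 3 * (t' + 1)\<close>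
      by (intro mult_left_mono gamma_le_6_gamma) auto
    finally show ?thesis by (simp add: mult.assoc)
  qed
  then show ?thesis using that by blast
qed

lemma summable_alpha_mult_abs_b: "summable (\<lambda>t. alpha t * \<bar>b t i\<bar>)"
proof -
  obtain C T where small: "\<And>t i. T \<le> t \<Longrightarrow> \<bar>b t i\<bar> \<le> C * gamma t"
    by (rule b_eventually_small) (rule that)
  show ?thesis
  proof (rule summable_comparison_test')
    show "summable (\<lambda>t. C * (alpha t * gamma t))"
      using summable_mult_if_summable_sq[OF alpha_sq summable_gamma_sq] by (rule summable_mult)
    fix t
    assume "T \<le> t"
    then have "alpha t * \<bar>b t i\<bar> \<le> alpha t * (C * gamma t)"
      using small alpha_pos[of t] by (intro mult_left_mono) (auto simp: less_imp_le)
    then show "norm (alpha t * \<bar>b t i\<bar>) \<le> C * (alpha t * gamma t)"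
      using alpha_pos[of t] by (simp add: abs_mult mult.left_commute)
  qed
qed

lemma abs_y_Suc_minus_le:
  "\<bar>y (Suc k) i - y k i\<bar>
    \<le> alpha 0 * (real CARD('n) * ((1 + gain_bound) * (qmax - qmin)) + imbal_bound * (\<bar>qmin\<bar> + \<bar>qmax\<bar>))"
proof -
  have "\<bar>a k i j * (x k j - x k i)\<bar> \<le> (1 + gain_bound) * (qmax - qmin)" for j
    unfolding abs_mult using a_le[of k i j] a_nonneg[of k i j] x_bounds[of k i] x_bounds[of k j]
    by (intro mult_mono) (auto simp: abs_le_iff)
  then have "(\<Sum>j\<in>UNIV. \<bar>a k i j * (x k j - x k i)\<bar>) \<le> real CARD('n) * ((1 + gain_bound) * (qmax - qmin))"
    using sum_bounded_above[of "UNIV :: 'n set" "\<lambda>j. \<bar>a k i j * (x k j - x k i)\<bar>"] by simp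
  then have "\<bar>\<Sum>j\<in>UNIV. a k i j * (x k j - x k i)\<bar> \<le> real CARD('n) * ((1 + gain_bound) * (qmax - qmin))"
    by (rule order_trans[OF sum_abs])
  moreover have "\<bar>b k i * x k i\<bar> \<le> imbal_bound * (\<bar>qmin\<bar> + \<bar>qmax\<bar>)"
    using abs_b_mult_x_le[of k i] mult_right_mono[OF abs_b_le[of k i], of "\<bar>qmin\<bar> + \<bar>qmax\<bar>"]
    by simp
  ultimately have "\<bar>(\<Sum>j\<in>UNIV. a k i j * (x k j - x k i)) + b k i * x k i\<bar>
      \<le> real CARD('n) * ((1 + gain_bound) * (qmax - qmin)) + imbal_bound * (\<bar>qmin\<bar> + \<bar>qmax\<bar>)"
    by (intro order_trans[OF abs_triangle_ineq] add_mono)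
  moreover have "0 < alpha k" and "alpha k \<le> alpha 0"
    using alpha_pos alpha_noninc by (auto intro: lift_Suc_antimono_le[of alpha 0 k])
  ultimately show ?thesis
    unfolding y_step_UNIV by (simp add: abs_mult mult_mono)
qed

lemma y_bounded:
  obtains M where "\<And>k i. \<bar>y k i\<bar> \<le> M"
proof -
  define J where "J = alpha 0 * (real CARD('n) * ((1 + gain_bound) * (qmax - qmin))
    + imbal_bound * (\<bar>qmin\<bar> + \<bar>qmax\<bar>))"
  define e where "e i t = alpha t * \<bar>b t i\<bar> * (\<bar>qmin\<bar> + \<bar>qmax\<bar>)" for i t
  have "0 \<le> J" unfolding J_def using abs_y_Suc_minus_le[of 0 undefined] by linarith
  have e_nonneg: "0 \<le> e i t" for i t
    unfolding e_def using alpha_pos[of t] by simp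
  have "summable (e i)" for i
    unfolding e_def using summable_alpha_mult_abs_b by (rule summable_mult2)
  have bound: "\<bar>y k i\<bar> \<le> \<bar>y 0 i\<bar> + \<bar>qmin\<bar> + \<bar>qmax\<bar> + J + suminf (e i)" for k i
  proof -
    have "(\<Sum>t<k. e i t) \<le> suminf (e i)"
      by (rule sum_le_suminf) (use \<open>summable (e i)\<close> e_nonneg in auto)
    moreover have "y k i \<le> max (y 0 i) (qmax + J) + (\<Sum>t<k. e i t)"
      by (rule le_max_plus_sum_if_drift[OF e_nonneg])
        (use y_Suc_le abs_y_Suc_minus_le in \<open>simp add: e_def J_def\<close>)
    moreover have "- y k i \<le> max (- y 0 i) (- qmin + J) + (\<Sum>t<k. e i t)"
      by (rule le_max_plus_sum_if_drift[OF e_nonneg])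
        (use y_Suc_ge abs_y_Suc_minus_le in \<open>simp add: e_def J_def\<close>)
    moreover have "max (y 0 i) (qmax + J) \<le> \<bar>y 0 i\<bar> + \<bar>qmin\<bar> + \<bar>qmax\<bar> + J"
      and "max (- y 0 i) (- qmin + J) \<le> \<bar>y 0 i\<bar> + \<bar>qmin\<bar> + \<bar>qmax\<bar> + J"
      using \<open>0 \<le> J\<close> by auto
    ultimately show ?thesis
      unfolding abs_le_iff[of "y k i"] by (intro conjI) linarith+
  qed
  show ?thesis
  proof (rule that)
    fix k i
    have "\<bar>y 0 i\<bar> + \<bar>qmin\<bar> + \<bar>qmax\<bar> + J + suminf (e i)
        \<le> (\<Sum>l\<in>UNIV. \<bar>y 0 l\<bar> + \<bar>qmin\<bar> + \<bar>qmax\<bar> + J + suminf (e l))"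
      using \<open>0 \<le> J\<close> \<open>\<And>i. summable (e i)\<close> e_nonneg
      by (intro member_le_sum add_nonneg_nonneg suminf_nonneg) auto
    with bound show "\<bar>y k i\<bar> \<le> (\<Sum>l\<in>UNIV. \<bar>y 0 l\<bar> + \<bar>qmin\<bar> + \<bar>qmax\<bar> + J + suminf (e l))"
      by (rule order_trans)
  qed
qed

lemma deviation_le_dirichlet_energy:
  obtains c where "0 < c"
    and "\<And>k. (\<Sum>i\<in>UNIV. (y k i - mean)\<^sup>2) \<le> c * dirichlet_energy (a k) (y_tilde k)"
proof -
  obtain M where M: "\<And>k i. \<bar>y k i\<bar> \<le> M"
    by (rule y_bounded) (rule that)
  define K where "K = max (2 * (M + \<bar>mean\<bar>) / (qmax - qmin)) (real CARD('n))"
  have "0 < K" unfolding K_def by (simp add: less_max_iff_disj)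
  obtain u v where "(u, v) \<in> E"
    using out_nbrs_nonempty unfolding out_nbrs_def by blast
  then have "0 < card E"
    by (auto simp: card_gt_0_iff)
  have dev: "(\<Sum>i\<in>UNIV. (y k i - mean)\<^sup>2)
      \<le> real CARD('n) * (K * real (card E))\<^sup>2 * dirichlet_energy (a k) (y_tilde k)" for k
  proof -
    define W where "W = dirichlet_energy (a k) (y_tilde k)"
    have "0 \<le> W" unfolding W_def by (intro dirichlet_energy_nonneg a_nonneg)
    have spread: "\<bar>y_tilde k p - y_tilde k q\<bar> \<le> real (card E) * sqrt W" for p q
      unfolding W_def by (rule abs_y_tilde_diff_le)
    have "(y k i - mean)\<^sup>2 \<le> (K * real (card E))\<^sup>2 * W" for i
    proof -
      have sum_eq: "(\<Sum>l\<in>UNIV. y k l) = real CARD('n) * mean"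
        using sum_y_eq[of k] by simp
      have bounded: "\<bar>y k l - mean\<bar> \<le> M + \<bar>mean\<bar>" for l
        using M[of k l] by linarith
      have "\<bar>y k i - mean\<bar> \<le> K * (real (card E) * sqrt W)"
        unfolding K_def by (rule mean_dev_le_clip_spread[OF q_lt mean_range sum_eq bounded spread])
      then have "\<bar>y k i - mean\<bar>\<^sup>2 \<le> (K * (real (card E) * sqrt W))\<^sup>2"
        by (intro power_mono) auto
      then show ?thesis
        using \<open>0 \<le> W\<close> by (simp add: power_mult_distrib)
    qed
    then have "(\<Sum>i\<in>UNIV. (y k i - mean)\<^sup>2) \<le> real CARD('n) * ((K * real (card E))\<^sup>2 * W)"
      using sum_bounded_above[of "UNIV :: 'n set" "\<lambda>i. (y k i - mean)\<^sup>2"] by simp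
    then show ?thesis unfolding W_def by (simp add: mult.assoc)
  qed
  have "0 < real CARD('n) * (K * real (card E))\<^sup>2"
    using \<open>0 < K\<close> \<open>0 < card E\<close> by (intro mult_pos_pos zero_less_power) simp_all
  then show ?thesis using dev by (rule that)
qed

lemma imbal_term_ge:
  obtains c where "0 < c"
    and "\<And>k. - (c * (\<Sum>i\<in>UNIV. \<bar>b k i\<bar>))
      \<le> (\<Sum>i\<in>UNIV. b k i * ((y_tilde k i)\<^sup>2 / 2 - y k i * y_tilde k i))"
proof -
  obtain M where M: "\<And>k i. \<bar>y k i\<bar> \<le> M"
    by (rule y_bounded) (rule that)
  define Q where "Q = \<bar>qmin\<bar> + \<bar>qmax\<bar>"
  define c where "c = Q\<^sup>2 / 2 + M * Q"
  have "0 < Q" unfolding Q_def using q_lt by linarith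
  moreover have "0 \<le> M" using M[of 0 undefined] by linarith
  ultimately have "0 < c" unfolding c_def by (simp add: add_pos_nonneg)
  have "- (c * \<bar>b k i\<bar>) \<le> b k i * ((y_tilde k i)\<^sup>2 / 2 - y k i * y_tilde k i)" for k i
  proof -
    have "\<bar>y_tilde k i\<bar> \<le> Q"
      unfolding Q_def using q_lt by (intro abs_clip_le) simp
    then have "(y_tilde k i)\<^sup>2 \<le> Q\<^sup>2"
      using power_mono[of "\<bar>y_tilde k i\<bar>" Q 2] by simp
    moreover have "\<bar>y k i * y_tilde k i\<bar> \<le> M * Q"
      unfolding abs_mult using M[of k i] \<open>\<bar>y_tilde k i\<bar> \<le> Q\<close> by (intro mult_mono) auto
    ultimately have "\<bar>(y_tilde k i)\<^sup>2 / 2 - y k i * y_tilde k i\<bar> \<le> c"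
      unfolding c_def by (intro order_trans[OF abs_triangle_ineq4] add_mono) auto
    then have "\<bar>b k i * ((y_tilde k i)\<^sup>2 / 2 - y k i * y_tilde k i)\<bar> \<le> \<bar>b k i\<bar> * c"
      unfolding abs_mult by (intro mult_left_mono) auto
    then show ?thesis by (simp add: abs_le_iff mult.commute)
  qed
  then have "(\<Sum>i\<in>UNIV. - (c * \<bar>b k i\<bar>))
      \<le> (\<Sum>i\<in>UNIV. b k i * ((y_tilde k i)\<^sup>2 / 2 - y k i * y_tilde k i))" for k
    by (intro sum_mono)
  then have "- (c * (\<Sum>i\<in>UNIV. \<bar>b k i\<bar>))
      \<le> (\<Sum>i\<in>UNIV. b k i * ((y_tilde k i)\<^sup>2 / 2 - y k i * y_tilde k i))" for k
    by (simp add: sum_negf sum_distrib_left)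
  with \<open>0 < c\<close> show ?thesis by (rule that)
qed

lemma Lplus_lower_bound:
  "\<exists>c1 c2. c1 > 0 \<and> c2 > 0 \<and> (\<forall>k.
     (\<Sum>i\<in>UNIV. \<Sum>j\<in>UNIV. y k i * Lplus E (a k) i j * clip qmin qmax (y k j))
       \<ge> c1 * (\<Sum>i\<in>UNIV. (y k i - mean)\<^sup>2) - c2 * (\<Sum>i\<in>UNIV. \<bar>b k i\<bar>))"
proof -
  obtain c where "0 < c"
    and dev: "\<And>k. (\<Sum>i\<in>UNIV. (y k i - mean)\<^sup>2) \<le> c * dirichlet_energy (a k) (y_tilde k)"
    by (rule deviation_le_dirichlet_energy) (rule that)
  obtain c2 where "0 < c2"
    and imbal: "\<And>k. - (c2 * (\<Sum>i\<in>UNIV. \<bar>b k i\<bar>))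
      \<le> (\<Sum>i\<in>UNIV. b k i * ((y_tilde k i)\<^sup>2 / 2 - y k i * y_tilde k i))"
    by (rule imbal_term_ge) (rule that)
  have "1 / (2 * c) * (\<Sum>i\<in>UNIV. (y k i - mean)\<^sup>2) - c2 * (\<Sum>i\<in>UNIV. \<bar>b k i\<bar>)
      \<le> (\<Sum>i\<in>UNIV. \<Sum>j\<in>UNIV. y k i * Lplus E (a k) i j * y_tilde k j)" for k
  proof -
    have "1 / (2 * c) * (\<Sum>i\<in>UNIV. (y k i - mean)\<^sup>2) \<le> dirichlet_energy (a k) (y_tilde k) / 2"
      using dev[of k] \<open>0 < c\<close> by (simp add: field_simps)
    then show ?thesis
      using Lplus_form_ge_y_tilde[of k] imbal[of k] by linarith
  qed
  then show ?thesis
    using \<open>0 < c\<close> \<open>0 < c2\<close> by (intro exI[of _ "1 / (2 * c)"] exI[of _ c2]) simp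
qed

end

theorem lemma9:
  fixes E :: "('n::finite \<times> 'n) set"
    and qmin qmax :: real
    and alpha :: "nat \<Rightarrow> real"
    and a :: "nat \<Rightarrow> 'n \<Rightarrow> 'n \<Rightarrow> real"
    and y x :: "nat \<Rightarrow> 'n \<Rightarrow> real"
  assumes no_loops: "\<forall>i. (i, i) \<notin> E"
    and strongly_connected: "\<forall>i j. (i, j) \<in> E\<^sup>*"
    and q_lt: "qmin < qmax"
    and avg_range: "qmin \<le> (\<Sum>i\<in>UNIV. y 0 i) / real (card (UNIV :: 'n set))"
                   "(\<Sum>i\<in>UNIV. y 0 i) / real (card (UNIV :: 'n set)) \<le> qmax"
    and alpha_pos: "\<forall>k. alpha k > 0"
    and alpha_noninc: "\<forall>k. alpha (Suc k) \<le> alpha k"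
    and alpha_div: "\<not> summable alpha"
    and alpha_sq: "summable (\<lambda>k. (alpha k)\<^sup>2)"
    and a_init: "\<forall>i j. a 0 i j = (if j \<in> in_nbrs E i then 1 else 0)"
    and a_step: "\<forall>k i j. a (Suc k) i j =
        (if j \<in> in_nbrs E i then a k i j + nflag E (a k) k j * gamma k else a k i j)"
    and x_vals: "\<forall>k i. x k i = qmin \<or> x k i = qmax"
    and x_hi_supp: "\<forall>k i. x k i = qmax \<longrightarrow> prob_hi qmin qmax (y k i) > 0"
    and x_lo_supp: "\<forall>k i. x k i = qmin \<longrightarrow> prob_hi qmin qmax (y k i) < 1"
    and y_step: "\<forall>k i. y (Suc k) i = y k i
        + alpha k * (\<Sum>j\<in>in_nbrs E i. a k i j * (x k j - x k i))
        + alpha k * imbal E (a k) i * x k i"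
  shows "\<exists>c1 c2. c1 > 0 \<and> c2 > 0 \<and> (\<forall>k.
     (\<Sum>i\<in>UNIV. \<Sum>j\<in>UNIV. y k i * Lplus E (a k) i j * clip qmin qmax (y k j))
       \<ge> c1 * (\<Sum>i\<in>UNIV. (y k i - (\<Sum>l\<in>UNIV. y 0 l) / real (card (UNIV :: 'n set)))\<^sup>2)
         - c2 * (\<Sum>i\<in>UNIV. \<bar>imbal E (a k) i\<bar>))"
proof -
  interpret quantized_consensus E qmin qmax alpha a y x
    using assms by unfold_locales auto
  show ?thesis
  proof (cases "CARD('n) = 1")
    case True
    then show ?thesis by (rule single_node_lower_bound)
  next
    case False
    interpret quantized_consensus_nontrivial E qmin qmax alpha a y x
      by unfold_locales (rule out_nbrs_nonempty_if_strongly_connected[OF \<open>\<forall>i j. (i, j) \<in> E\<^sup>*\<close> False])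
    show ?thesis by (rule Lplus_lower_bound)
  qed
qed

end
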